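(* For all prefixes $p,p'$ there is at most one prefix $p''$ such that $p \cdot p' \sim p''$. If $s$ is a stream type with $p : s$, and $s'$ is the (unique) stream type with $\delta_p s \sim s'$, and $p' : s'$, then such a $p''$ exists and satisfies: (1) $p'' : s$, and (2) the derivative of $s$ by $p''$ equals the derivative of $s'$ by $p'$, i.e. for the unique types with $\delta_{p''} s \sim u$ and $\delta_{p'} s' \sim u'$ we have $u = u'$.
   Context: Stream types are generated by $s,t ::= 1 \mid \varepsilon \mid s\cdot t \mid s\,\|\,t \mid s+t \mid s^\star$. Prefixes are generated by $p ::= \mathtt{oneEmp} \mid \mathtt{oneFull} \mid \mathtt{epsEmp} \mid \mathtt{par}(p,p') \mid \mathtt{catA}(p) \mid \mathtt{catB}(p,p') \mid \mathtt{sumEmp} \mid \mathtt{inl}(p) \mid \mathtt{inr}(p) \mid \mathtt{starEmp} \mid \mathtt{starDone} \mid \mathtt{stA}(p) \mid \mathtt{stB}(p,p')$. Maximality (inductive): $\mathtt{epsEmp}$, $\mathtt{oneFull}$, $\mathtt{starDone}$ are maximal; $\mathtt{par}(p_1,p_2)$, $\mathtt{catB}(p_1,p_2)$, $\mathtt{stB}(p_1,p_2)$ are maximal if $p_1$ and $p_2$ are; $\mathtt{inl}(p)$, $\mathtt{inr}(p)$ are maximal if $p$ is. Prefix typing $p : s$ (inductive): $\mathtt{epsEmp}:\varepsilon$; $\mathtt{oneEmp}:1$; $\mathtt{oneFull}:1$; $\mathtt{par}(p_1,p_2): s\|t$ if $p_1:s$, $p_2:t$; $\mathtt{catA}(p):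 s\cdot t$ if $p:s$; $\mathtt{catB}(p_1,p_2): s\cdot t$ if $p_1:s$, $p_1$ maximal, $p_2:t$; $\mathtt{sumEmp}: s+t$; $\mathtt{inl}(p):s+t$ if $p:s$; $\mathtt{inr}(p):s+t$ if $p:t$; $\mathtt{starEmp}:s^\star$; $\mathtt{starDone}:s^\star$; $\mathtt{stA}(p):s^\star$ if $p:s$; $\mathtt{stB}(p,p'):s^\star$ if $p:s$, $p$ maximal, $p':s^\star$. Derivative relation $\delta_p s \sim s'$ (inductive): $\delta_{\mathtt{epsEmp}}\varepsilon\sim\varepsilon$; $\delta_{\mathtt{oneEmp}}1\sim 1$; $\delta_{\mathtt{oneFull}}1\sim\varepsilon$; $\delta_{\mathtt{par}(p_1,p_2)}(s\|t)\sim s'\|t'$ if $\delta_{p_1}s\sim s'$, $\delta_{p_2}t\sim t'$; $\delta_{\mathtt{catA}(p)}(s\cdot t)\sim s'\cdot t$ if $\delta_p s\sim s'$; $\delta_{\mathtt{catB}(p_1,p_2)}(s\cdot t)\sim t'$ if $\delta_{p_2}t\sim t'$; $\delta_{\mathtt{sumEmp}}(s+t)\sim s+t$; $\delta_{\mathtt{inl}(p)}(s+t)\sim s'$ if $\delta_p s\sim s'$; $\delta_{\mathtt{inr}(p)}(s+t)\sim t'$ if $\delta_p t\sim t'$; $\delta_{\mathtt{starEmp}}s^\star\sim s^\star$; $\delta_{\mathtt{starDone}}s^\star\sim\varepsilon$; $\delta_{\mathtt{stA}(p)}s^\star\sim s'\cdot s^\star$ if $\delta_p s\sim s'$; $\delta_{\mathtt{stB}(p,p')}s^\star\sim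 s'$ if $\delta_{p'}s^\star\sim s'$. (For $p:s$ such $s'$ exists and is unique.) Prefix concatenation $p\cdot p'\sim p''$ (inductive): $\mathtt{epsEmp}\cdot\mathtt{epsEmp}\sim\mathtt{epsEmp}$; $\mathtt{oneEmp}\cdot p\sim p$ whenever $p:1$; $\mathtt{oneFull}\cdot\mathtt{epsEmp}\sim\mathtt{oneFull}$; $\mathtt{par}(p_1,p_2)\cdot\mathtt{par}(p_1',p_2')\sim\mathtt{par}(p_1'',p_2'')$ if $p_i\cdot p_i'\sim p_i''$ for $i=1,2$; $\mathtt{catA}(p)\cdot\mathtt{catA}(p')\sim\mathtt{catA}(p'')$ if $p\cdot p'\sim p''$; $\mathtt{catA}(p)\cdot\mathtt{catB}(p',q)\sim\mathtt{catB}(p'',q)$ if $p\cdot p'\sim p''$; $\mathtt{catB}(p,p')\cdot p''\sim\mathtt{catB}(p,p''')$ if $p'\cdot p''\sim p'''$; $\mathtt{sumEmp}\cdot p\sim p$; $\mathtt{inl}(p)\cdot p'\sim\mathtt{inl}(p'')$ if $p\cdot p'\sim p''$; $\mathtt{inr}(p)\cdot p'\sim\mathtt{inr}(p'')$ if $p\cdot p'\sim p''$; $\mathtt{starEmp}\cdot p\sim p$; $\mathtt{starDone}\cdot\mathtt{epsEmp}\sim\mathtt{starDone}$; $\mathtt{stA}(p)\cdot\mathtt{catA}(p')\sim\mathtt{stA}(p'')$ if $p\cdot p'\sim p''$; $\mathtt{stA}(p)\cdot\mathtt{catB}(p',q)\sim\mathtt{stB}(p'',q)$ if $p\cdot p'\sim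 p''$; $\mathtt{stB}(p,p')\cdot p''\sim\mathtt{stB}(p,p''')$ if $p'\cdot p''\sim p'''$. *)

theory Defs
  imports Main
begin

datatype stype = One | Eps | Cat stype stype | Par stype stype | Sum stype stype | Star stype

datatype prefix = OneEmp | OneFull | EpsEmp | PPar prefix prefix | CatA prefix | CatB prefix prefix
  | SumEmp | Inl prefix | Inr prefix | StarEmp | StarDone | StA prefix | StB prefix prefix

inductive maximal :: "prefix \<Rightarrow> bool" where
  "maximal EpsEmp"
| "maximal OneFull"
| "maximal StarDone"
| "maximal p1 \<Longrightarrow> maximal p2 \<Longrightarrow> maximal (PPar p1 p2)"
| "maximal p1 \<Longrightarrow> maximal p2 \<Longrightarrow> maximal (CatB p1 p2)"
| "maximal p1 \<Longrightarrow> maximal p2 \<Longrightarrow> maximal (StB p1 p2)"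
| "maximal p \<Longrightarrow> maximal (Inl p)"
| "maximal p \<Longrightarrow> maximal (Inr p)"

inductive has_type :: "prefix \<Rightarrow> stype \<Rightarrow> bool" where
  "has_type EpsEmp Eps"
| "has_type OneEmp One"
| "has_type OneFull One"
| "has_type p1 s \<Longrightarrow> has_type p2 t \<Longrightarrow> has_type (PPar p1 p2) (Par s t)"
| "has_type p s \<Longrightarrow> has_type (CatA p) (Cat s t)"
| "has_type p1 s \<Longrightarrow> maximal p1 \<Longrightarrow> has_type p2 t \<Longrightarrow> has_type (CatB p1 p2) (Cat s t)"
| "has_type SumEmp (Sum s t)"
| "has_type p s \<Longrightarrow> has_type (Inl p) (Sum s t)"
| "has_type p t \<Longrightarrow> has_type (Inr p) (Sum s t)"
| "has_type StarEmp (Star s)"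
| "has_type StarDone (Star s)"
| "has_type p s \<Longrightarrow> has_type (StA p) (Star s)"
| "has_type p s \<Longrightarrow> maximal p \<Longrightarrow> has_type p' (Star s) \<Longrightarrow> has_type (StB p p') (Star s)"

inductive deriv :: "prefix \<Rightarrow> stype \<Rightarrow> stype \<Rightarrow> bool" where
  "deriv EpsEmp Eps Eps"
| "deriv OneEmp One One"
| "deriv OneFull One Eps"
| "deriv p1 s s' \<Longrightarrow> deriv p2 t t' \<Longrightarrow> deriv (PPar p1 p2) (Par s t) (Par s' t')"
| "deriv p s s' \<Longrightarrow> deriv (CatA p) (Cat s t) (Cat s' t)"
| "deriv p2 t t' \<Longrightarrow> deriv (CatB p1 p2) (Cat s t) t'"
| "deriv SumEmp (Sum s t) (Sum s t)"
| "deriv p s s' \<Longrightarrow> deriv (Inl p) (Sum s t) s'"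
| "deriv p t t' \<Longrightarrow> deriv (Inr p) (Sum s t) t'"
| "deriv StarEmp (Star s) (Star s)"
| "deriv StarDone (Star s) Eps"
| "deriv p s s' \<Longrightarrow> deriv (StA p) (Star s) (Cat s' (Star s))"
| "deriv p' (Star s) s' \<Longrightarrow> deriv (StB p p') (Star s) s'"

inductive pconcat :: "prefix \<Rightarrow> prefix \<Rightarrow> prefix \<Rightarrow> bool" where
  "pconcat EpsEmp EpsEmp EpsEmp"
| "has_type p One \<Longrightarrow> pconcat OneEmp p p"
| "pconcat OneFull EpsEmp OneFull"
| "pconcat p1 p1' p1'' \<Longrightarrow> pconcat p2 p2' p2'' \<Longrightarrow> pconcat (PPar p1 p2) (PPar p1' p2') (PPar p1'' p2'')"
| "pconcat p p' p'' \<Longrightarrow> pconcat (CatA p) (CatA p') (CatA p'')"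
| "pconcat p p' p'' \<Longrightarrow> pconcat (CatA p) (CatB p' q) (CatB p'' q)"
| "pconcat p' p'' p''' \<Longrightarrow> pconcat (CatB p p') p'' (CatB p p''')"
| "pconcat SumEmp p p"
| "pconcat p p' p'' \<Longrightarrow> pconcat (Inl p) p' (Inl p'')"
| "pconcat p p' p'' \<Longrightarrow> pconcat (Inr p) p' (Inr p'')"
| "pconcat StarEmp p p"
| "pconcat StarDone EpsEmp StarDone"
| "pconcat p p' p'' \<Longrightarrow> pconcat (StA p) (CatA p') (StA p'')"
| "pconcat p p' p'' \<Longrightarrow> pconcat (StA p) (CatB p' q) (StB p'' q)"
| "pconcat p' p'' p''' \<Longrightarrow> pconcat (StB p p') p'' (StB p p''')"

end

theory Submission
  imports Defs
begin

text \<open>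
  The one subtle point is that CatB and StB require a maximal left
  component; it is supplied by the fact that concatenating a maximal prefix onto a well-typed one
  again yields a maximal prefix.
\<close>

declare maximal.intros[intro] has_type.intros[intro] deriv.intros[intro] pconcat.intros[intro]

inductive_cases maximal_elims:
  "maximal (PPar p q)" "maximal (CatA p)" "maximal (CatB p q)" "maximal (StA p)" "maximal (StB p q)"
  "maximal (Inl p)" "maximal (Inr p)"

inductive_cases has_type_elims:
  "has_type p Eps" "has_type p (Par s t)" "has_type p (Cat s t)"

inductive_cases has_type_prefix_elims:
  "has_type (PPar p q) s" "has_type (CatA p) s" "has_type (CatB p q) s" "has_type (Inl p) s"
  "has_type (Inr p) s" "has_type (StA p) s" "has_type (StB p q) s"

inductive_cases deriv_elims:
  "deriv EpsEmp s u" "deriv OneEmp s u" "deriv OneFull s u" "deriv (PPar p q) s u"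
  "deriv (CatA p) s u" "deriv (CatB p q) s u" "deriv SumEmp s u" "deriv (Inl p) s u"
  "deriv (Inr p) s u" "deriv StarEmp s u" "deriv StarDone s u" "deriv (StA p) s u"
  "deriv (StB p q) s u"

inductive_cases pconcat_elims:
  "pconcat EpsEmp q r" "pconcat OneEmp q r" "pconcat OneFull q r" "pconcat (PPar p1 p2) q r"
  "pconcat (CatA p) q r" "pconcat (CatB p1 p2) q r" "pconcat SumEmp q r" "pconcat (Inl p) q r"
  "pconcat (Inr p) q r" "pconcat StarEmp q r" "pconcat StarDone q r" "pconcat (StA p) q r"
  "pconcat (StB p1 p2) q r"

lemma deriv_deterministic: "deriv p s u \<Longrightarrow> deriv p s v \<Longrightarrow> u = v"
  by (induction arbitrary: v rule: deriv.induct) (blast elim: deriv_elims)+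

lemma pconcat_deterministic: "pconcat p q r \<Longrightarrow> pconcat p q r' \<Longrightarrow> r = r'"
  by (induction arbitrary: r' rule: pconcat.induct) (blast elim: pconcat_elims)+

lemma pconcat_exists:
  "has_type p s \<Longrightarrow> deriv p s s' \<Longrightarrow> has_type p' s' \<Longrightarrow> \<exists>p''. pconcat p p' p''"
  by (induction arbitrary: s' p' rule: has_type.induct) (blast elim: deriv_elims has_type_elims)+

lemma pconcat_maximal:
  "pconcat p p' p'' \<Longrightarrow> has_type p s \<Longrightarrow> maximal p' \<Longrightarrow> maximal p''"
  by (induction arbitrary: s rule: pconcat.induct) (auto elim!: has_type_prefix_elims maximal_elims)

lemma pconcat_has_type:
  "pconcat p p' p'' \<Longrightarrow> has_type p s \<Longrightarrow> deriv p s s' \<Longrightarrow> has_type p' s' \<Longrightarrow> has_type p'' s"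
  by (induction arbitrary: s s' rule: pconcat.induct)
    (auto elim!: has_type_prefix_elims deriv_elims intro: pconcat_maximal)

lemma deriv_pconcat:
  "pconcat p p' p'' \<Longrightarrow> has_type p s \<Longrightarrow> deriv p s s' \<Longrightarrow> deriv p' s' u \<Longrightarrow> deriv p'' s u"
  by (induction arbitrary: s s' u rule: pconcat.induct) (auto elim!: has_type_prefix_elims deriv_elims)

theorem mainTheorem6:
  shows "(\<forall>p p' q1 q2. pconcat p p' q1 \<longrightarrow> pconcat p p' q2 \<longrightarrow> q1 = q2) \<and>
         (\<forall>p p' s s'. has_type p s \<longrightarrow> deriv p s s' \<longrightarrow> has_type p' s' \<longrightarrow>
            (\<exists>p''. pconcat p p' p'' \<and> has_type p'' s \<and>
               (\<forall>u u'. deriv p'' s u \<longrightarrow> deriv p' s' u' \<longrightarrow> u = u')))"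
proof (intro conjI allI impI)
  fix p p' q1 q2
  show "pconcat p p' q1 \<Longrightarrow> pconcat p p' q2 \<Longrightarrow> q1 = q2"
    by (rule pconcat_deterministic)
next
  fix p p' s s'
  assume p: "has_type p s" and d: "deriv p s s'" and p': "has_type p' s'"
  then obtain p'' where c: "pconcat p p' p''"
    using pconcat_exists by blast
  have "has_type p'' s"
    using pconcat_has_type[OF c p d p'] .
  moreover have "u = u'" if "deriv p'' s u" and "deriv p' s' u'" for u u'
    using deriv_pconcat[OF c p d \<open>deriv p' s' u'\<close>] \<open>deriv p'' s u\<close> deriv_deterministic by blast
  ultimately show "\<exists>p''. pconcat p p' p'' \<and> has_type p'' s \<and>
      (\<forall>u u'. deriv p'' s u \<longrightarrow> deriv p' s' u' \<longrightarrow> u = u')"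
    using c by blast
qed

end
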